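(* Let $\{T^k\}_k$ be a nested sequence of trees satisfying the standing assumptions. The big bang condition holds if and only if there exists a nested sequence of trees $\tilde T^k$, with $\tilde T^k$ a restriction of $T^k$ for each $k$, such that $|\partial\tilde T^k|\to\infty$ and $\{\tilde T^k\}_k$ has vanishing spread.
   Context: Trees $T=(V,E,\rho,\ell)$ are finite rooted trees with positive edge lengths, viewed as metric objects; $\partial T$ is the leaf set and $\ell_\gamma$ the distance from the root to point $\gamma$. Restriction of $T$ to $L\subseteq\partial T$: the tree rooted at $\rho$ consisting of all points on paths from $\rho$ to leaves in $L$. Standing assumptions: $\{T^k\}_{k\ge1}$ nested with common root ($T^{k-1}$ is a restriction of $T^k$), $|\partial T^k|=k$, and uniformly bounded height $\sup_k\max_{x\in\partial T^k}\ell_x<\infty$. A sequence $\{\tilde T^k\}$ is nested if $\tilde T^{k-1}$ is a restriction of $\tilde T^k$. Truncation: $T(s)=\{\gamma:\ell_\gamma\le s\}$ with leaf set $\partial T(s)$. Big bang condition: for every $s>0$, $|\partial T^k(s)|\to\infty$ as $k\to\infty$. Spread: for leaves $x,y$, $\ell_{xy}$ is the length of the common part of the paths from $\rho$ to $x$ and to $y$; $\mathrm{Spr}(T)=\frac{\sum_{x\ne y}(\ell_{xy}\wedge1)}{|\partial T|(|\partial T|-1)}$, the sum over ordered pairs of distinct leaves. $\{T^k\}$ has vanishing spread if $\limsup_k\mathrm{Spr}(T^k)=0$. *)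

theory Defs
  imports "HOL-Analysis.Analysis" "HOL-Library.Liminf_Limsup"
begin

text \<open>A finite rooted metric tree is encoded (up to root-preserving isometry) by its
leaf set L, the root-to-leaf distances h x = l_x, and the lengths b x y = l_xy of the
common part of the root paths to x and y. The tree itself is the union of the
root-to-leaf geodesics; its points are pairs (x,r), 0 <= r <= l_x, where (x,r) and (y,r)
are identified iff r <= l_xy.\<close>

type_synonym 'a mtree = "'a set \<times> ('a \<Rightarrow> real) \<times> ('a \<Rightarrow> 'a \<Rightarrow> real)"

definition leaves :: "'a mtree \<Rightarrow> 'a set" where
  "leaves T = fst T"

definition hgt :: "'a mtree \<Rightarrow> 'a \<Rightarrow> real" where
  "hgt T = fst (snd T)"

definition brl :: "'a mtree \<Rightarrow> 'a \<Rightarrow> 'a \<Rightarrow> real" where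
  "brl T = snd (snd T)"

text \<open>Validity: the data come from a finite rooted tree with positive edge lengths whose
leaf set is L (a leaf is not an interior point of the path to another leaf).\<close>
definition is_tree :: "'a mtree \<Rightarrow> bool" where
  "is_tree T \<longleftrightarrow> finite (leaves T) \<and>
     (\<forall>x\<in>leaves T. hgt T x > 0 \<and> brl T x x = hgt T x) \<and>
     (\<forall>x\<in>leaves T. \<forall>y\<in>leaves T. brl T x y = brl T y x \<and> 0 \<le> brl T x y \<and> brl T x y \<le> hgt T x) \<and>
     (\<forall>x\<in>leaves T. \<forall>y\<in>leaves T. x \<noteq> y \<longrightarrow> brl T x y < hgt T x) \<and>
     (\<forall>x\<in>leaves T. \<forall>y\<in>leaves T. \<forall>z\<in>leaves T. min (brl T x z) (brl T z y) \<le> brl T x y)"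

definition is_restriction :: "'a mtree \<Rightarrow> 'a mtree \<Rightarrow> bool" where
  "is_restriction S T \<longleftrightarrow> leaves S \<subseteq> leaves T \<and>
     (\<forall>x\<in>leaves S. hgt S x = hgt T x) \<and>
     (\<forall>x\<in>leaves S. \<forall>y\<in>leaves S. brl S x y = brl T x y)"

definition tpts :: "'a mtree \<Rightarrow> ('a \<times> real) set" where
  "tpts T = {(x, r). x \<in> leaves T \<and> 0 \<le> r \<and> r \<le> hgt T x}"

definition same_pt :: "'a mtree \<Rightarrow> 'a \<times> real \<Rightarrow> 'a \<times> real \<Rightarrow> bool" where
  "same_pt T p q \<longleftrightarrow> snd p = snd q \<and> snd p \<le> brl T (fst p) (fst q)"

definition below :: "'a mtree \<Rightarrow> 'a \<times> real \<Rightarrow> 'a \<times> real \<Rightarrow> bool" where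
  "below T p q \<longleftrightarrow> snd p \<le> snd q \<and> snd p \<le> brl T (fst p) (fst q)"

definition point_of :: "'a mtree \<Rightarrow> 'a \<times> real \<Rightarrow> ('a \<times> real) set" where
  "point_of T p = {q \<in> tpts T. same_pt T p q}"

text \<open>Leaf set of the truncation T(s) = {points at distance <= s from the root}:
its maximal points with respect to the ancestor order.\<close>
definition trunc_leaves :: "'a mtree \<Rightarrow> real \<Rightarrow> ('a \<times> real) set set" where
  "trunc_leaves T s = point_of T `
     {p \<in> tpts T. snd p \<le> s \<and> (\<forall>q\<in>tpts T. snd q \<le> s \<longrightarrow> below T p q \<longrightarrow> same_pt T p q)}"

definition spread :: "'a mtree \<Rightarrow> real" where
  "spread T = (\<Sum>x\<in>leaves T. \<Sum>y\<in>leaves T - {x}. min (brl T x y) 1) /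
              (real (card (leaves T)) * (real (card (leaves T)) - 1))"

text \<open>Standing assumptions on a sequence T 1, T 2, ... (index 0 is ignored).\<close>
definition standing :: "(nat \<Rightarrow> 'a mtree) \<Rightarrow> bool" where
  "standing T \<longleftrightarrow> (\<forall>k\<ge>1. is_tree (T k) \<and> card (leaves (T k)) = k) \<and>
     (\<forall>k\<ge>2. is_restriction (T (k - 1)) (T k)) \<and>
     (\<exists>C. \<forall>k\<ge>1. \<forall>x\<in>leaves (T k). hgt (T k) x \<le> C)"

definition big_bang :: "(nat \<Rightarrow> 'a mtree) \<Rightarrow> bool" where
  "big_bang T \<longleftrightarrow> (\<forall>s>0. filterlim (\<lambda>k. card (trunc_leaves (T k) s)) at_top sequentially)"

definition vanishing_spread :: "(nat \<Rightarrow> 'a mtree) \<Rightarrow> bool" where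
  "vanishing_spread T \<longleftrightarrow> limsup (\<lambda>k. ereal (spread (T k))) = 0"

end

theory Submission
  imports Defs
begin

text \<open>Two leaves lie below the same point of the truncation T(s) iff their root paths
  share length at least s. If the truncations at some level s > 0 had at most M points
  along infinitely many k, then in any restriction with at least 2M leaves a positive
  proportion of pairs (Cauchy--Schwarz over the truncation classes) would branch above s,
  keeping the spread away from 0. Conversely, under the big bang condition the restrictions
  are built in stages: given leaves A of some T N, pass to a T N' whose truncation at level
  1/(j+1) has many more than |A| points and add one leaf below each of them; the new leaves
  branch pairwise below 1/(j+1) and A is negligible, so the spread is O(1/j). Holding each
  stage until the next one is reached gives nested restrictions of the T k.\<close>

definition restrict_tree :: "'a mtree \<Rightarrow> 'a set \<Rightarrow> 'a mtree" where
  "restrict_tree T L = (L, hgt T, brl T)"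

lemma restrict_tree_simps [simp]:
  "leaves (restrict_tree T L) = L" "hgt (restrict_tree T L) = hgt T" "brl (restrict_tree T L) = brl T"
  by (simp_all add: restrict_tree_def leaves_def hgt_def brl_def)

lemma is_treeD:
  assumes "is_tree T"
  shows "finite (leaves T)"
    and "x \<in> leaves T \<Longrightarrow> hgt T x > 0"
    and "x \<in> leaves T \<Longrightarrow> brl T x x = hgt T x"
    and "x \<in> leaves T \<Longrightarrow> y \<in> leaves T \<Longrightarrow> brl T x y = brl T y x"
    and "x \<in> leaves T \<Longrightarrow> y \<in> leaves T \<Longrightarrow> 0 \<le> brl T x y"
    and "x \<in> leaves T \<Longrightarrow> y \<in> leaves T \<Longrightarrow> brl T x y \<le> hgt T x"
    and "x \<in> leaves T \<Longrightarrow> y \<in> leaves T \<Longrightarrow> x \<noteq> y \<Longrightarrow> brl T x y < hgt T x"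
    and "x \<in> leaves T \<Longrightarrow> y \<in> leaves T \<Longrightarrow> z \<in> leaves T \<Longrightarrow>
      min (brl T x z) (brl T z y) \<le> brl T x y"
  using assms unfolding is_tree_def by auto

lemma is_tree_restrict_tree:
  assumes T: "is_tree T" and L: "L \<subseteq> leaves T"
  shows "is_tree (restrict_tree T L)"
  unfolding is_tree_def restrict_tree_simps
proof (intro conjI ballI impI)
  show "finite L"
    using finite_subset[OF L is_treeD(1)[OF T]] .
  fix x y z assume "x \<in> L" "y \<in> L" "z \<in> L"
  then have xyz: "x \<in> leaves T" "y \<in> leaves T" "z \<in> leaves T"
    using L by auto
  show "0 < hgt T x" "brl T x x = hgt T x" "brl T x y = brl T y x" "0 \<le> brl T x y"
    "brl T x y \<le> hgt T x" "min (brl T x z) (brl T z y) \<le> brl T x y"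
    using is_treeD(2-6,8)[OF T] xyz by blast+
  show "brl T x y < hgt T x" if "x \<noteq> y"
    using is_treeD(7)[OF T] xyz that by blast
qed

lemma is_restriction_refl: "is_restriction T T"
  by (simp add: is_restriction_def)

lemma is_restriction_trans:
  "is_restriction R S \<Longrightarrow> is_restriction S T \<Longrightarrow> is_restriction R T"
  unfolding is_restriction_def by (auto simp: subset_iff)

lemma is_restriction_restrict_tree:
  "L \<subseteq> leaves T \<Longrightarrow> is_restriction (restrict_tree T L) T"
  by (simp add: is_restriction_def)

lemma is_restriction_restrict_tree_mono:
  assumes "is_restriction S T" and "L \<subseteq> L'" and "L \<subseteq> leaves S"
  shows "is_restriction (restrict_tree S L) (restrict_tree T L')"
  using assms unfolding is_restriction_def by (simp add: subset_iff)

lemma standing_is_tree: "standing T \<Longrightarrow> 1 \<le> k \<Longrightarrow> is_tree (T k)"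
  unfolding standing_def by auto

lemma standing_is_restriction:
  assumes "standing T" and "1 \<le> k" and "k \<le> k'"
  shows "is_restriction (T k) (T k')"
  using \<open>k \<le> k'\<close>
proof (induction k' rule: dec_induct)
  case base
  show ?case by (rule is_restriction_refl)
next
  case (step n)
  have "2 \<le> Suc n" using assms(2) step(1) by simp
  then have "is_restriction (T n) (T (Suc n))"
    using assms(1) unfolding standing_def by (metis diff_Suc_1)
  with step(3) show ?case by (rule is_restriction_trans)
qed

definition trunc_pt :: "'a mtree \<Rightarrow> real \<Rightarrow> 'a \<Rightarrow> ('a \<times> real) set" where
  "trunc_pt T s x = point_of T (x, min s (hgt T x))"

lemma trunc_pt_eq_iff:
  assumes T: "is_tree T" and s: "s > 0" and x: "x \<in> leaves T" and y: "y \<in> leaves T"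
  shows "trunc_pt T s x = trunc_pt T s y \<longleftrightarrow> x = y \<or> s \<le> brl T x y"
proof
  assume eq: "trunc_pt T s x = trunc_pt T s y"
  have "(y, min s (hgt T y)) \<in> trunc_pt T s y"
    using is_treeD(2,3)[OF T y] y s unfolding trunc_pt_def point_of_def tpts_def same_pt_def by auto
  then have "(y, min s (hgt T y)) \<in> trunc_pt T s x"
    using eq by simp
  then have h: "min s (hgt T x) = min s (hgt T y)" "min s (hgt T x) \<le> brl T x y"
    unfolding trunc_pt_def point_of_def same_pt_def by auto
  show "x = y \<or> s \<le> brl T x y"
  proof (cases "s \<le> hgt T x")
    case True
    then show ?thesis using h by auto
  next
    case False
    then have "hgt T x \<le> brl T x y" using h by auto
    then show ?thesis using is_treeD(7)[OF T x y] by force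
  qed
next
  assume "x = y \<or> s \<le> brl T x y"
  then show "trunc_pt T s x = trunc_pt T s y"
  proof
    assume sb: "s \<le> brl T x y"
    have "s \<le> hgt T x" "s \<le> hgt T y"
      using is_treeD(4,6)[OF T] x y sb by (metis order_trans)+
    then have mins: "min s (hgt T x) = s" "min s (hgt T y) = s"
      by auto
    \<comment> \<open>ultrametric inequality: x and y share their ancestors up to height s\<close>
    have "s \<le> brl T x z \<longleftrightarrow> s \<le> brl T y z" if z: "z \<in> leaves T" for z
      using is_treeD(8)[OF T y z x] is_treeD(8)[OF T x z y] is_treeD(4)[OF T x y] sb by linarith
    then show ?thesis
      unfolding trunc_pt_def point_of_def same_pt_def tpts_def mins by auto
  qed simp
qed

lemma trunc_leaves_eq_image:
  assumes T: "is_tree T" and s: "s > 0"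
  shows "trunc_leaves T s = trunc_pt T s ` leaves T"
proof
  show "trunc_leaves T s \<subseteq> trunc_pt T s ` leaves T"
  proof
    fix P assume "P \<in> trunc_leaves T s"
    then obtain x r where p: "(x, r) \<in> tpts T" "r \<le> s"
      and maximal: "\<forall>q\<in>tpts T. snd q \<le> s \<longrightarrow> below T (x, r) q \<longrightarrow> same_pt T (x, r) q"
      and P: "P = point_of T (x, r)"
      unfolding trunc_leaves_def by auto
    have x: "x \<in> leaves T" "0 \<le> r" "r \<le> hgt T x"
      using p unfolding tpts_def by auto
    have "(x, min s (hgt T x)) \<in> tpts T" "below T (x, r) (x, min s (hgt T x))"
      using x s p is_treeD(2,3)[OF T x(1)] unfolding tpts_def below_def by auto
    then have "same_pt T (x, r) (x, min s (hgt T x))"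
      using maximal by auto
    then have "r = min s (hgt T x)"
      unfolding same_pt_def by simp
    then show "P \<in> trunc_pt T s ` leaves T"
      using P x unfolding trunc_pt_def by auto
  qed
next
  show "trunc_pt T s ` leaves T \<subseteq> trunc_leaves T s"
  proof
    fix P assume "P \<in> trunc_pt T s ` leaves T"
    then obtain x where x: "x \<in> leaves T" and P: "P = point_of T (x, min s (hgt T x))"
      unfolding trunc_pt_def by auto
    have "(x, min s (hgt T x)) \<in> tpts T"
      using x s is_treeD(2)[OF T x] unfolding tpts_def by auto
    moreover have "same_pt T (x, min s (hgt T x)) q"
      if q: "q \<in> tpts T" "snd q \<le> s" and b: "below T (x, min s (hgt T x)) q" for q
    proof -
      obtain y r where qq: "q = (y, r)" by (cases q)
      have y: "y \<in> leaves T" "r \<le> hgt T y"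
        using q qq unfolding tpts_def by auto
      have b: "min s (hgt T x) \<le> r" "min s (hgt T x) \<le> brl T x y"
        using b qq unfolding below_def by auto
      have "r = min s (hgt T x)"
      proof (cases "s \<le> hgt T x")
        case True
        then show ?thesis using b q qq by auto
      next
        case False
        then have "x = y"
          using b is_treeD(7)[OF T x y(1)] by force
        then show ?thesis using b y False by auto
      qed
      then show ?thesis
        using b qq unfolding same_pt_def by auto
    qed
    ultimately show "P \<in> trunc_leaves T s"
      unfolding trunc_leaves_def P by auto
  qed
qed

lemma spread_restrict_tree:
  "spread (restrict_tree T L) =
    (\<Sum>x\<in>L. \<Sum>y\<in>L - {x}. min (brl T x y) 1) / (real (card L) * (real (card L) - 1))"
  by (simp add: spread_def)

lemma spread_restrict_tree_eq:
  assumes "is_restriction S T" and "L \<subseteq> leaves S"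
  shows "spread (restrict_tree S L) = spread (restrict_tree T L)"
proof -
  have "brl S x y = brl T x y" if "x \<in> L" "y \<in> L" for x y
    using assms that unfolding is_restriction_def by blast
  then show ?thesis
    unfolding spread_restrict_tree by (intro arg_cong2[where f = "(/)"] sum.cong refl) auto
qed

lemma spread_nonneg:
  assumes "is_tree X"
  shows "0 \<le> spread X"
proof -
  have "0 \<le> (\<Sum>x\<in>leaves X. \<Sum>y\<in>leaves X - {x}. min (brl X x y) 1)"
    using is_treeD(5)[OF assms] by (intro sum_nonneg) auto
  moreover have "0 \<le> real (card (leaves X)) * (real (card (leaves X)) - 1)"
    by (cases "card (leaves X)") auto
  ultimately show ?thesis
    unfolding spread_def by simp
qed

lemma sum_offdiag_le:
  fixes f :: "'a \<Rightarrow> 'a \<Rightarrow> real"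
  assumes fin: "finite L" and A: "A \<subseteq> L" and s: "s \<ge> 0"
    and small: "\<And>x y. x \<in> L - A \<Longrightarrow> y \<in> L - A \<Longrightarrow> x \<noteq> y \<Longrightarrow> f x y \<le> s"
    and one: "\<And>x y. f x y \<le> 1"
  shows "(\<Sum>x\<in>L. \<Sum>y\<in>L - {x}. f x y) \<le>
    s * real (card L) * (real (card L) - 1) + 2 * real (card A) * real (card L)"
proof -
  have finA: "finite A"
    using fin A finite_subset by blast
  have row: "(\<Sum>y\<in>L - {x}. f x y) \<le>
      s * (real (card L) - 1) + card A + (if x \<in> A then real (card L) else 0)"
    if x: "x \<in> L" for x
  proof -
    have cardL: "card (L - {x}) = card L - 1" "card L \<ge> 1"
      using x fin by (simp, metis One_nat_def Suc_leI card_gt_0_iff empty_iff)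
    show ?thesis
    proof (cases "x \<in> A")
      case True
      have "(\<Sum>y\<in>L - {x}. f x y) \<le> (\<Sum>y\<in>L - {x}. 1)"
        by (rule sum_mono) (rule one)
      also have "\<dots> \<le> card L"
        using cardL by simp
      moreover have "0 \<le> s * (real (card L) - 1)"
        using s cardL by simp
      ultimately show ?thesis
        using True by simp
    next
      case False
      have "(\<Sum>y\<in>L - {x}. f x y) \<le> (\<Sum>y\<in>L - {x}. s + (if y \<in> A then 1 else 0))"
        using small[of x] x False s by (intro sum_mono) (auto intro: order_trans[OF one])
      also have "\<dots> = s * card (L - {x}) + card ((L - {x}) \<inter> A)"
        using fin by (simp add: sum.distrib sum.If_cases)
      also have "\<dots> \<le> s * (real (card L) - 1) + card A"
        using card_mono[OF finA, of "(L - {x}) \<inter> A"] cardL by (simp add: of_nat_diff)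
      finally show ?thesis
        using False by simp
    qed
  qed
  have "(\<Sum>x\<in>L. \<Sum>y\<in>L - {x}. f x y) \<le>
      (\<Sum>x\<in>L. s * (real (card L) - 1) + card A + (if x \<in> A then real (card L) else 0))"
    by (rule sum_mono) (rule row)
  also have "\<dots> = card L * (s * (real (card L) - 1) + card A) + card A * card L"
    using fin A by (simp add: sum.distrib sum.If_cases Int_absorb1)
  finally show ?thesis
    by (simp add: algebra_simps)
qed

text \<open>Cauchy--Schwarz over the fibres of g.\<close>
lemma sum_offdiag_ge_fibres:
  fixes f :: "'a \<Rightarrow> 'a \<Rightarrow> real" and g :: "'a \<Rightarrow> 'b"
  assumes fin: "finite L" and c: "c \<ge> 0"
    and nonneg: "\<And>x y. x \<in> L \<Longrightarrow> y \<in> L \<Longrightarrow> 0 \<le> f x y"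
    and fibre: "\<And>x y. x \<in> L \<Longrightarrow> y \<in> L \<Longrightarrow> x \<noteq> y \<Longrightarrow> g x = g y \<Longrightarrow> c \<le> f x y"
  shows "c * ((real (card L))\<^sup>2 / card (g ` L) - card L) \<le> (\<Sum>x\<in>L. \<Sum>y\<in>L - {x}. f x y)"
proof -
  define F where "F x = {y \<in> L. g y = g x}" for x
  have row: "c * (real (card (F x)) - 1) \<le> (\<Sum>y\<in>L - {x}. f x y)" if x: "x \<in> L" for x
  proof -
    have xF: "x \<in> F x" and finF: "finite (F x)"
      using x fin by (simp_all add: F_def)
    have "card (F x) \<ge> 1"
      using xF finF by (metis One_nat_def Suc_leI card_gt_0_iff empty_iff)
    then have "c * (real (card (F x)) - 1) = (\<Sum>y\<in>F x - {x}. c)"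
      using xF by (simp add: of_nat_diff)
    also have "\<dots> \<le> (\<Sum>y\<in>F x - {x}. f x y)"
      by (rule sum_mono) (use fibre x in \<open>auto simp: F_def\<close>)
    also have "\<dots> \<le> (\<Sum>y\<in>L - {x}. f x y)"
      by (rule sum_mono2) (use fin nonneg x in \<open>auto simp: F_def\<close>)
    finally show ?thesis .
  qed
  have squares: "(\<Sum>x\<in>L. real (card (F x))) = (\<Sum>v\<in>g ` L. real (card {x \<in> L. g x = v}) ^ 2)"
    using fin by (subst sum.image_gen[of L _ g]) (auto simp: F_def power2_eq_square intro!: sum.cong)
  have total: "real (card L) = (\<Sum>v\<in>g ` L. real (card {x \<in> L. g x = v}))"
    using sum.image_gen[OF fin, of "\<lambda>_. 1 :: real" g] by simp
  have "(real (card L))\<^sup>2 \<le> (\<Sum>x\<in>L. real (card (F x))) * card (g ` L)"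
    unfolding total squares by (rule sum_squared_le_sum_of_squares)
  then have "(real (card L))\<^sup>2 / card (g ` L) \<le> (\<Sum>x\<in>L. real (card (F x)))"
    by (cases "card (g ` L) = 0") (simp_all add: sum_nonneg divide_le_eq)
  then have "c * ((real (card L))\<^sup>2 / card (g ` L) - card L) \<le> c * ((\<Sum>x\<in>L. real (card (F x))) - card L)"
    using c by (intro mult_left_mono) auto
  also have "\<dots> = (\<Sum>x\<in>L. c * (real (card (F x)) - 1))"
    by (simp add: sum_distrib_left sum_subtractf algebra_simps)
  also have "\<dots> \<le> (\<Sum>x\<in>L. \<Sum>y\<in>L - {x}. f x y)"
    by (rule sum_mono) (rule row)
  finally show ?thesis .
qed

lemma spread_restrict_tree_le:
  assumes fin: "finite L" and A: "A \<subseteq> L" and s: "s \<ge> 0" and n: "card L \<ge> 2"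
    and small: "\<And>x y. x \<in> L - A \<Longrightarrow> y \<in> L - A \<Longrightarrow> x \<noteq> y \<Longrightarrow> brl T x y \<le> s"
  shows "spread (restrict_tree T L) \<le> s + 2 * card A / (real (card L) - 1)"
proof -
  define n where "n = real (card L)"
  have n2: "n \<ge> 2"
    using n unfolding n_def by simp
  then have pos: "n * (n - 1) > 0"
    by simp
  have "(\<Sum>x\<in>L. \<Sum>y\<in>L - {x}. min (brl T x y) 1) \<le> s * n * (n - 1) + 2 * real (card A) * n"
    unfolding n_def using small by (intro sum_offdiag_le[OF fin A s]) force+
  then have "spread (restrict_tree T L) \<le> (s * n * (n - 1) + 2 * real (card A) * n) / (n * (n - 1))"
    unfolding spread_restrict_tree n_def[symmetric] using pos by (simp add: divide_right_mono)
  also have "\<dots> = s + 2 * card A / (n - 1)"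
    using n2 by (simp add: field_simps)
  finally show ?thesis
    unfolding n_def .
qed

lemma spread_ge_classes:
  fixes g :: "'a \<Rightarrow> 'b" and M :: real
  assumes X: "is_tree X" and c: "0 \<le> c" "c \<le> 1" and M: "1 \<le> M"
    and classes: "card (g ` leaves X) \<le> M" and n: "2 * M \<le> card (leaves X)"
    and fibre: "\<And>x y. x \<in> leaves X \<Longrightarrow> y \<in> leaves X \<Longrightarrow> x \<noteq> y \<Longrightarrow> g x = g y \<Longrightarrow> c \<le> brl X x y"
  shows "c / (2 * M) \<le> spread X"
proof -
  define n where "n = real (card (leaves X))"
  define m where "m = real (card (g ` leaves X))"
  define S where "S = (\<Sum>x\<in>leaves X. \<Sum>y\<in>leaves X - {x}. min (brl X x y) 1)"
  have n2: "2 \<le> n" and M0: "0 < M"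
    using n M unfolding n_def by auto
  then have "leaves X \<noteq> {}"
    unfolding n_def by auto
  then have m: "1 \<le> m" "m \<le> M"
    using classes is_treeD(1)[OF X] unfolding m_def by (auto simp: Suc_leI card_gt_0_iff)
  have "c * (n\<^sup>2 / m - n) \<le> S"
    unfolding n_def m_def S_def using is_treeD(5)[OF X] fibre c
    by (intro sum_offdiag_ge_fibres[OF is_treeD(1)[OF X]]) auto
  moreover have "n\<^sup>2 / M \<le> n\<^sup>2 / m"
    using m by (intro divide_left_mono) auto
  ultimately have "c * (n\<^sup>2 / M - n) \<le> S"
    using c by (smt (verit) mult_left_mono)
  moreover have "n * (n - 1) \<le> 2 * M * (n\<^sup>2 / M - n)"
  proof -
    have "2 * M * n \<le> n * n"
      using n n2 unfolding n_def by (intro mult_right_mono) auto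
    moreover have "2 * M * (n\<^sup>2 / M - n) = 2 * n * n - 2 * M * n"
      using M0 by (simp add: field_simps power2_eq_square)
    moreover have "n * (n - 1) = n * n - n"
      by (simp add: algebra_simps)
    ultimately show ?thesis
      using n2 by linarith
  qed
  ultimately have "c * (n * (n - 1)) \<le> 2 * M * S"
    using c M0 by (smt (verit) mult_left_mono mult.left_commute)
  moreover have "n * (n - 1) > 0"
    using n2 by simp
  ultimately show ?thesis
    using M0 unfolding spread_def n_def[symmetric] S_def[symmetric]
    by (simp add: divide_le_eq le_divide_eq algebra_simps)
qed

lemma vanishing_spread_eventually_less:
  assumes "vanishing_spread T" and "0 < e"
  shows "eventually (\<lambda>k. spread (T k) < e) sequentially"
proof -
  have "limsup (\<lambda>k. ereal (spread (T k))) < ereal e"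
    using assms unfolding vanishing_spread_def by simp
  then show ?thesis
    by (rule Limsup_lessD[THEN eventually_mono]) simp
qed

lemma vanishing_spreadI:
  assumes "eventually (\<lambda>k. 0 \<le> spread (T k)) sequentially"
    and "eventually (\<lambda>k. spread (T k) \<le> u k) sequentially" and "u \<longlonglongrightarrow> 0"
  shows "vanishing_spread T"
proof -
  have "(\<lambda>k. spread (T k)) \<longlonglongrightarrow> 0"
    by (rule tendsto_sandwich[OF assms(1,2) tendsto_const assms(3)])
  then have "(\<lambda>k. ereal (spread (T k))) \<longlonglongrightarrow> ereal 0"
    by simp
  then have "limsup (\<lambda>k. ereal (spread (T k))) = ereal 0"
    by (rule lim_imp_Limsup[OF trivial_limit_sequentially])
  then show ?thesis
    unfolding vanishing_spread_def by (simp add: zero_ereal_def)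
qed

lemma vanishing_restrictions_imp_big_bang:
  assumes st: "standing T"
    and restr: "\<forall>k\<ge>1. is_tree (Tt k) \<and> is_restriction (Tt k) (T k)"
    and card_lim: "filterlim (\<lambda>k. card (leaves (Tt k))) at_top sequentially"
    and vanish: "vanishing_spread Tt"
  shows "big_bang T"
  unfolding big_bang_def filterlim_at_top
proof (intro allI impI)
  fix s :: real and Z :: nat
  assume s: "s > 0"
  define M where "M = real (max Z 1)"
  define c where "c = min s 1"
  have M: "1 \<le> M" and c: "0 < c" "c \<le> 1"
    using s unfolding M_def c_def by auto
  then have e: "0 < c / (2 * M)"
    by simp
  have "eventually (\<lambda>k. spread (Tt k) < c / (2 * M) \<and> 2 * M \<le> card (leaves (Tt k)) \<and> 1 \<le> k)
      sequentially"
    using vanishing_spread_eventually_less[OF vanish e]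
      card_lim[unfolded filterlim_at_top, rule_format, of "2 * max Z 1"] eventually_ge_at_top[of 1]
    by eventually_elim (auto simp: M_def)
  then show "eventually (\<lambda>k. Z \<le> card (trunc_leaves (T k) s)) sequentially"
  proof eventually_elim
    case (elim k)
    then have T: "is_tree (T k)" and Tt: "is_tree (Tt k)" and R: "is_restriction (Tt k) (T k)"
      using standing_is_tree[OF st] restr by auto
    have sub: "leaves (Tt k) \<subseteq> leaves (T k)"
      using R unfolding is_restriction_def by blast
    define g where "g = trunc_pt (T k) s"
    show ?case
    proof (rule ccontr)
      assume "\<not> Z \<le> card (trunc_leaves (T k) s)"
      moreover have "card (g ` leaves (Tt k)) \<le> card (trunc_leaves (T k) s)"
        unfolding trunc_leaves_eq_image[OF T s] g_def
        using sub is_treeD(1)[OF T] by (intro card_mono) auto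
      ultimately have "card (g ` leaves (Tt k)) \<le> M"
        unfolding M_def by linarith
      moreover have "c \<le> brl (Tt k) x y"
        if "x \<in> leaves (Tt k)" "y \<in> leaves (Tt k)" "x \<noteq> y" "g x = g y" for x y
        using that sub trunc_pt_eq_iff[OF T s] R unfolding g_def is_restriction_def c_def
        by (metis (no_types, lifting) min.coboundedI1 subsetD)
      ultimately have "c / (2 * M) \<le> spread (Tt k)"
        using spread_ge_classes[OF Tt] c M elim by (metis less_imp_le)
      then show False
        using elim by simp
    qed
  qed
qed

lemma big_bang_extend:
  assumes st: "standing T" and bb: "big_bang T" and N: "1 \<le> N" and A: "A \<subseteq> leaves (T N)"
  obtains N' A' where "N < N'" "A \<subseteq> A'" "A' \<subseteq> leaves (T N')" "Suc j \<le> card A'"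
    "spread (restrict_tree (T N') A') \<le> 3 / Suc j"
proof -
  define s :: real where "s = 1 / Suc j"
  define a where "a = card A"
  have s: "s > 0"
    unfolding s_def by simp
  then have "eventually (\<lambda>k. Suc (Suc j * Suc a) \<le> card (trunc_leaves (T k) s)) sequentially"
    using bb unfolding big_bang_def filterlim_at_top by blast
  then obtain K where K: "\<And>k. K \<le> k \<Longrightarrow> Suc j * Suc a < card (trunc_leaves (T k) s)"
    unfolding eventually_sequentially Suc_le_eq by blast
  define N' where "N' = max K (Suc N)"
  have N': "N < N'" and many: "Suc j * Suc a < card (trunc_leaves (T N') s)"
    using K[of N'] unfolding N'_def by auto
  have T: "is_tree (T N')"
    using standing_is_tree[OF st] N N' by simp
  have AN': "A \<subseteq> leaves (T N')"
    using standing_is_restriction[OF st N, of N'] N' A unfolding is_restriction_def by auto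
  define g where "g = trunc_pt (T N') s"
  have "\<exists>B \<subseteq> leaves (T N'). inj_on g B \<and> g ` leaves (T N') = g ` B"
    by (rule subset_image_inj[THEN iffD1]) (rule subset_refl)
  then obtain B where B: "B \<subseteq> leaves (T N')" "inj_on g B" "g ` leaves (T N') = g ` B"
    by blast
  define A' where "A' = A \<union> B"
  have A': "A' \<subseteq> leaves (T N')" "finite A'"
    using AN' B(1) is_treeD(1)[OF T] finite_subset unfolding A'_def by auto
  have "card (trunc_leaves (T N') s) = card B"
    using trunc_leaves_eq_image[OF T s] B(3) card_image[OF B(2)] unfolding g_def by simp
  also have "\<dots> \<le> card A'"
    using A'(2) unfolding A'_def by (intro card_mono) auto
  finally have n: "Suc j * Suc a < card A'"
    using many by linarith
  have "spread (restrict_tree (T N') A') \<le> s + 2 * card A / (real (card A') - 1)"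
  proof (rule spread_restrict_tree_le[OF A'(2)])
    show "A \<subseteq> A'" "0 \<le> s"
      using s unfolding A'_def by auto
    show "2 \<le> card A'"
      using n by (simp add: Suc_le_eq)
    fix x y assume "x \<in> A' - A" "y \<in> A' - A" "x \<noteq> y"
    then have "x \<in> B" "y \<in> B" "g x \<noteq> g y"
      using B(2) unfolding A'_def inj_on_def by auto
    then show "brl (T N') x y \<le> s"
      using trunc_pt_eq_iff[OF T s] B(1) unfolding g_def by force
  qed
  also have "2 * card A / (real (card A') - 1) \<le> 2 / Suc j"
  proof -
    have "real (Suc j * Suc a) \<le> real (card A') - 1"
      using n by linarith
    then have "real a * Suc j \<le> real (card A') - 1"
      by (simp add: algebra_simps)
    moreover have "real (card A') - 1 > 0"
      using n by simp
    ultimately show ?thesis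
      unfolding a_def[symmetric] by (simp add: divide_simps)
  qed
  finally have "spread (restrict_tree (T N') A') \<le> 3 / Suc j"
    unfolding s_def by (simp add: add_divide_distrib[symmetric])
  moreover have "Suc j \<le> card A'"
    using n by (simp add: Suc_le_eq)
  ultimately show ?thesis
    using that N' A' unfolding A'_def by blast
qed

lemma big_bang_stages:
  assumes st: "standing T" and bb: "big_bang T"
  obtains N :: "nat \<Rightarrow> nat" and A :: "nat \<Rightarrow> 'a set"
  where "strict_mono N" "N 0 = 1" "mono A" "\<And>j. A j \<subseteq> leaves (T (N j))" "\<And>j. j \<le> card (A j)"
    "\<And>j. spread (restrict_tree (T (N (Suc j))) (A (Suc j))) \<le> 3 / Suc j"
proof -
  define P where "P n p \<longleftrightarrow> 1 \<le> fst p \<and> snd p \<subseteq> leaves (T (fst p)) \<and> (n = 0 \<longrightarrow> fst p = 1)"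
    for n :: nat and p :: "nat \<times> 'a set"
  define Q where "Q n p p' \<longleftrightarrow> fst p < fst p' \<and> snd p \<subseteq> snd p' \<and> Suc n \<le> card (snd p') \<and>
      spread (restrict_tree (T (fst p')) (snd p')) \<le> 3 / Suc n"
    for n :: nat and p p' :: "nat \<times> 'a set"
  have "\<exists>f. \<forall>n. P n (f n) \<and> Q n (f n) (f (Suc n))"
  proof (rule dependent_nat_choice)
    show "\<exists>p. P 0 p"
      by (rule exI[of _ "(1, {})"]) (simp add: P_def)
  next
    fix p n assume "P n p"
    then obtain N' A' where "fst p < N'" "snd p \<subseteq> A'" "A' \<subseteq> leaves (T N')" "Suc n \<le> card A'"
      "spread (restrict_tree (T N') A') \<le> 3 / Suc n"
      using big_bang_extend[OF st bb, of "fst p" "snd p" n] unfolding P_def by blast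
    then show "\<exists>p'. P (Suc n) p' \<and> Q n p p'"
      by (intro exI[of _ "(N', A')"]) (simp add: P_def Q_def)
  qed
  then obtain f where f: "\<And>n. P n (f n)" "\<And>n. Q n (f n) (f (Suc n))"
    by blast
  show ?thesis
  proof (rule that[of "fst \<circ> f" "snd \<circ> f"])
    show "strict_mono (fst \<circ> f)"
      using f(2) by (intro strict_monoI_Suc) (simp add: Q_def)
    show "mono (snd \<circ> f)"
      unfolding mono_iff_le_Suc using f(2) by (simp add: Q_def)
    show "(fst \<circ> f) 0 = 1" "(snd \<circ> f) j \<subseteq> leaves (T ((fst \<circ> f) j))" for j
      using f(1)[of 0] f(1)[of j] by (simp_all add: P_def)
    show "j \<le> card ((snd \<circ> f) j)" for j
      using f(2)[of "j - 1"] by (cases j) (simp_all add: Q_def)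
    show "spread (restrict_tree (T ((fst \<circ> f) (Suc j))) ((snd \<circ> f) (Suc j))) \<le> 3 / Suc j" for j
      using f(2)[of j] by (simp add: Q_def)
  qed
qed

lemma strict_mono_floor_index:
  fixes N :: "nat \<Rightarrow> nat"
  assumes N: "strict_mono N"
  obtains J where "mono J" "\<And>k. N 0 \<le> k \<Longrightarrow> N (J k) \<le> k" "\<And>j k. N j \<le> k \<Longrightarrow> j \<le> J k"
proof
  define J where "J k = (LEAST j. k < N (Suc j))" for k
  have next_stage: "k < N (Suc (J k))" for k
    unfolding J_def by (rule LeastI[of _ k]) (use strict_mono_imp_increasing[OF N, of "Suc k"] in simp)
  show "mono J"
  proof (rule monoI)
    fix k k' :: nat assume "k \<le> k'"
    then have "k < N (Suc (J k'))"
      using next_stage[of k'] by simp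
    then show "J k \<le> J k'"
      unfolding J_def[of k] by (rule Least_le)
  qed
  show "N (J k) \<le> k" if "N 0 \<le> k" for k
  proof (cases "J k")
    case (Suc i)
    then have "\<not> k < N (Suc i)"
      unfolding J_def by (metis lessI not_less_Least)
    then show ?thesis
      using Suc by simp
  qed (use that in simp)
  show "j \<le> J k" if "N j \<le> k" for j k
  proof (rule ccontr)
    assume "\<not> j \<le> J k"
    then have "N (Suc (J k)) \<le> N j"
      using N by (simp add: strict_mono_less_eq)
    then show False
      using next_stage[of k] that by simp
  qed
qed

lemma stage_is_restriction:
  fixes N :: "nat \<Rightarrow> nat"
  assumes st: "standing T" and N: "strict_mono N" "N 0 = 1" and k: "N j \<le> k"
  shows "is_restriction (T (N j)) (T k)"
proof (rule standing_is_restriction[OF st _ k])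
  show "1 \<le> N j"
    using strict_mono_leD[OF N(1), of 0 j] N(2) by simp
qed

lemma stages_imp_vanishing_restrictions:
  fixes T :: "nat \<Rightarrow> 'a mtree"
  assumes st: "standing T" and N: "strict_mono N" "N 0 = 1" and A: "mono A"
    and A_leaves: "\<And>j. A j \<subseteq> leaves (T (N j))" and A_card: "\<And>j. j \<le> card (A j)"
    and A_spread: "\<And>j. spread (restrict_tree (T (N (Suc j))) (A (Suc j))) \<le> 3 / Suc j"
  shows "\<exists>Tt :: nat \<Rightarrow> 'a mtree.
    (\<forall>k\<ge>1. is_tree (Tt k) \<and> is_restriction (Tt k) (T k)) \<and>
    (\<forall>k\<ge>2. is_restriction (Tt (k - 1)) (Tt k)) \<and>
    filterlim (\<lambda>k. card (leaves (Tt k))) at_top sequentially \<and>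
    vanishing_spread Tt"
proof -
  obtain J where J: "mono J" "\<And>k. 1 \<le> k \<Longrightarrow> N (J k) \<le> k" "\<And>j k. N j \<le> k \<Longrightarrow> j \<le> J k"
    using strict_mono_floor_index[OF N(1)] N(2) by metis
  have AJ: "A (J k) \<subseteq> leaves (T k)" if "1 \<le> k" for k
    using A_leaves[of "J k"] stage_is_restriction[OF st N J(2)[OF that]]
    unfolding is_restriction_def by blast
  define Tt where "Tt k = restrict_tree (T k) (A (J k))" for k
  have J_lim: "filterlim J at_top sequentially"
    unfolding filterlim_at_top eventually_sequentially using J(3) by blast
  have trees: "is_tree (Tt k)" "is_restriction (Tt k) (T k)" if "1 \<le> k" for k
    unfolding Tt_def using AJ[OF that] standing_is_tree[OF st that]
    by (simp_all add: is_tree_restrict_tree is_restriction_restrict_tree)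
  have spread_le: "spread (Tt k) \<le> 3 / real (J k)" if k: "N 1 \<le> k" for k
  proof -
    obtain i where i: "J k = Suc i"
      using J(3)[OF k] by (cases "J k") auto
    have "1 \<le> k"
      using k strict_mono_leD[OF N(1), of 0 1] N(2) by simp
    then have "spread (Tt k) = spread (restrict_tree (T (N (J k))) (A (J k)))"
      unfolding Tt_def using spread_restrict_tree_eq[OF stage_is_restriction[OF st N J(2)] A_leaves]
      by simp
    then show ?thesis
      using A_spread[of i] i by simp
  qed
  have vanishing: "vanishing_spread Tt"
  proof (rule vanishing_spreadI)
    show "eventually (\<lambda>k. 0 \<le> spread (Tt k)) sequentially"
      using eventually_ge_at_top[of 1] by eventually_elim (rule spread_nonneg[OF trees(1)])
    show "eventually (\<lambda>k. spread (Tt k) \<le> 3 / real (J k)) sequentially"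
      using eventually_ge_at_top[of "N 1"] by eventually_elim (rule spread_le)
    show "(\<lambda>k. 3 / real (J k)) \<longlonglongrightarrow> 0"
      by (intro tendsto_divide_0[OF tendsto_const] filterlim_at_top_imp_at_infinity
          filterlim_compose[OF filterlim_real_sequentially J_lim])
  qed
  have nested: "is_restriction (Tt (k - 1)) (Tt k)" if k: "2 \<le> k" for k
    unfolding Tt_def using k AJ[of "k - 1"] monoD[OF A monoD[OF J(1), of "k - 1" k]]
    by (intro is_restriction_restrict_tree_mono standing_is_restriction[OF st]) auto
  have card: "filterlim (\<lambda>k. card (leaves (Tt k))) at_top sequentially"
    unfolding Tt_def restrict_tree_simps
    by (rule filterlim_at_top_mono[OF J_lim]) (simp add: A_card)
  show ?thesis
    by (intro exI[of _ Tt] conjI allI impI trees nested card vanishing)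
qed

lemma big_bang_imp_vanishing_restrictions:
  fixes T :: "nat \<Rightarrow> 'a mtree"
  assumes st: "standing T" and bb: "big_bang T"
  shows "\<exists>Tt :: nat \<Rightarrow> 'a mtree.
    (\<forall>k\<ge>1. is_tree (Tt k) \<and> is_restriction (Tt k) (T k)) \<and>
    (\<forall>k\<ge>2. is_restriction (Tt (k - 1)) (Tt k)) \<and>
    filterlim (\<lambda>k. card (leaves (Tt k))) at_top sequentially \<and>
    vanishing_spread Tt"
  by (rule big_bang_stages[OF st bb]) (rule stages_imp_vanishing_restrictions[OF st])

theorem mainTheorem3:
  fixes T :: "nat \<Rightarrow> 'a mtree"
  assumes "standing T"
  shows "big_bang T \<longleftrightarrow>
    (\<exists>Tt :: nat \<Rightarrow> 'a mtree.
        (\<forall>k\<ge>1. is_tree (Tt k) \<and> is_restriction (Tt k) (T k)) \<and>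
        (\<forall>k\<ge>2. is_restriction (Tt (k - 1)) (Tt k)) \<and>
        filterlim (\<lambda>k. card (leaves (Tt k))) at_top sequentially \<and>
        vanishing_spread Tt)"
  using big_bang_imp_vanishing_restrictions[OF assms] vanishing_restrictions_imp_big_bang[OF assms]
  by blast

end
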